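(* Let $(\Omega,\mathcal F,\mu)$ be a measure space, $p\in[1,\infty)$, $k\ge1$ and $f\in L^p(\Omega,\mathcal F,\mu)$. Then: (i) $\mathscr D_{p,k+1}(f)\le\mathrm{Var}_{p,k}(f)\le 2\mathscr D_{p,k}(f)$. (ii) If $\mu$ is finite, $\mathscr D_{p,k}(f)\le\mathrm{Var}_{p,k}(f,\Omega)\le\mathrm{Var}_{p,k}(f)\le2\mathscr D_{p,k}(f)\le2\mathrm{Var}_{p,k}(f,\Omega)$. (iii) If $\mu$ has no atoms of infinite measure, then $\mathscr D_{p,k}(f)\le\mathrm{Var}_{p,k}(f)\le2\mathscr D_{p,k}(f)$.
   Context: All measures are assumed not identically zero. $\mathscr G_{p,k}$ is the set of functions $\sum_{i=1}^l a_i\mathbf 1_{A_i}\in L^p$ with $l\le k$, $\{A_i\}$ a measurable partition of $\Omega$, $a_i\in\mathbb R$; $\mathscr D_{p,k}(f)=\inf\{\|f-h\|_p:\ h\in\mathscr G_{p,k}\}$. $p$-variation: for measurable $A$ with $\mu(A)<\infty$, $\mathrm{var}_p(f,A)^p=\frac1{\mu(A)}\int_{A\times A}|f(x)-f(y)|^p\,d\mu(x)d\mu(y)$ if $\mu(A)>0$ and $0$ otherwise; for a finite collection $\mathcal P=(A_i)$ of disjoint measurable sets of finite measure, $\mathrm{var}_p(f,\mathcal P)=(\sum_i\mathrm{var}_p(f,A_i)^p)^{1/p}$; $\mathrm{Var}_{p,k}(f,A)=\inf\{\mathrm{var}_p(f,\mathcal P):\ \mathcal P$ a measurable partition of $A$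 with at most $k$ sets$\}$; $\mathrm{Var}_{p,k}(f)=\sup\{\mathrm{Var}_{p,k}(f,A):\ A\in\mathcal F,\ \mu(A)<\infty\}$. An atom is a measurable $A$ with $\mu(A)>0$ such that every measurable $B\subset A$ with $\mu(B)<\mu(A)$ satisfies $\mu(B)=0$. *)

theory Defs
  imports "HOL-Analysis.Analysis"
begin

definition memLp :: "'a measure \<Rightarrow> real \<Rightarrow> ('a \<Rightarrow> real) \<Rightarrow> bool" where
  "memLp M p f \<longleftrightarrow> f \<in> borel_measurable M \<and> integrable M (\<lambda>x. \<bar>f x\<bar> powr p)"

definition Lp_dist :: "'a measure \<Rightarrow> real \<Rightarrow> ('a \<Rightarrow> real) \<Rightarrow> ('a \<Rightarrow> real) \<Rightarrow> real" where
  "Lp_dist M p f h = (enn2real (\<integral>\<^sup>+ x. ennreal (\<bar>f x - h x\<bar> powr p) \<partial>M)) powr (1 / p)"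

definition Gpk :: "'a measure \<Rightarrow> real \<Rightarrow> nat \<Rightarrow> ('a \<Rightarrow> real) set" where
  "Gpk M p k = {h. memLp M p h \<and>
     (\<exists>l A a. l \<le> k \<and> (\<forall>i<l. A i \<in> sets M) \<and> disjoint_family_on A {..<l} \<and>
        (\<Union>i<l. A i) = space M \<and> h = (\<lambda>x. \<Sum>i<l. a i * indicator (A i) x))}"

definition Dpk :: "'a measure \<Rightarrow> real \<Rightarrow> nat \<Rightarrow> ('a \<Rightarrow> real) \<Rightarrow> real" where
  "Dpk M p k f = Inf {Lp_dist M p f h | h. h \<in> Gpk M p k}"

definition varp :: "'a measure \<Rightarrow> real \<Rightarrow> ('a \<Rightarrow> real) \<Rightarrow> 'a set \<Rightarrow> real" where
  "varp M p f A = (if emeasure M A > 0 then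
     (enn2real (\<integral>\<^sup>+ x\<in>A. (\<integral>\<^sup>+ y\<in>A. ennreal (\<bar>f x - f y\<bar> powr p) \<partial>M) \<partial>M) / measure M A) powr (1 / p)
   else 0)"

definition varp_fam :: "'a measure \<Rightarrow> real \<Rightarrow> ('a \<Rightarrow> real) \<Rightarrow> nat \<Rightarrow> (nat \<Rightarrow> 'a set) \<Rightarrow> real" where
  "varp_fam M p f l B = (\<Sum>i<l. varp M p f (B i) powr p) powr (1 / p)"

definition Varpk_on :: "'a measure \<Rightarrow> real \<Rightarrow> nat \<Rightarrow> ('a \<Rightarrow> real) \<Rightarrow> 'a set \<Rightarrow> real" where
  "Varpk_on M p k f A = Inf {varp_fam M p f l B | l B. l \<le> k \<and> (\<forall>i<l. B i \<in> sets M) \<and>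
       disjoint_family_on B {..<l} \<and> (\<Union>i<l. B i) = A}"

definition Varpk :: "'a measure \<Rightarrow> real \<Rightarrow> nat \<Rightarrow> ('a \<Rightarrow> real) \<Rightarrow> real" where
  "Varpk M p k f = Sup {Varpk_on M p k f A | A. A \<in> sets M \<and> emeasure M A < \<infinity>}"

definition is_atom :: "'a measure \<Rightarrow> 'a set \<Rightarrow> bool" where
  "is_atom M A \<longleftrightarrow> A \<in> sets M \<and> emeasure M A > 0 \<and>
     (\<forall>B\<in>sets M. B \<subseteq> A \<longrightarrow> emeasure M B < emeasure M A \<longrightarrow> emeasure M B = 0)"

end

theory Submission
  imports Defs
begin

text \<open>
  For a step function h with at most k values, cut a set A of finite measure along the level
  sets of h: on each piece B, var_p(f,B)^p \<le> 2^p \<integral>_B |f - c|^p for every constant c, and summing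
  gives Var_{p,k}(f,A) \<le> 2 ||f - h||_p.

  Conversely, on each piece B of a partition some point y satisfies
  \<integral>_B |f x - f y|^p dx \<le> var_p(f,B)^p, so the step function with value f y on B approximates f
  on B. Applied to A = {|f| > \<delta>}, whose complement carries little L^p mass, and with the value 0
  off A, this gives D_{p,k+1} \<le> Var_{p,k}; when \<mu> is finite one takes A = \<Omega> and no extra value is
  needed. When \<mu>(\<Omega>) = \<infinity> and there are no atoms of infinite measure, one adjoins to A a set of
  large finite measure on which |f| is tiny: a largest piece of a near-optimal partition then lies
  mostly in that set, giving it the value 0 costs little, and again no (k+1)-st value is needed.
\<close>

section \<open>Inequalities for real powers\<close>

lemma powr_superadditive:
  fixes a b p :: real
  assumes "0 \<le> a" "0 \<le> b" "1 \<le> p"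
  shows "a powr p + b powr p \<le> (a + b) powr p"
proof -
  have split: "x powr p = x * x powr (p - 1)" if "0 \<le> x" for x :: real
  proof (cases "x = 0")
    case False
    then have "x powr (1 + (p - 1)) = x powr 1 * x powr (p - 1)" by (simp only: powr_add)
    then show ?thesis using that by simp
  qed (use assms in simp)
  have "a * a powr (p - 1) \<le> a * (a + b) powr (p - 1)"
    using assms by (intro mult_left_mono powr_mono2) auto
  moreover have "b * b powr (p - 1) \<le> b * (a + b) powr (p - 1)"
    using assms by (intro mult_left_mono powr_mono2) auto
  ultimately show ?thesis using split[of a] split[of b] split[of "a + b"] assms
    by (simp add: distrib_right)
qed

lemma powr_inverse_subadditive:
  fixes x y p :: real
  assumes "0 \<le> x" "0 \<le> y" "1 \<le> p"
  shows "(x + y) powr (1 / p) \<le> x powr (1 / p) + y powr (1 / p)"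
proof -
  have "x + y = (x powr (1 / p)) powr p + (y powr (1 / p)) powr p"
    using assms by (simp add: powr_powr)
  also have "\<dots> \<le> (x powr (1 / p) + y powr (1 / p)) powr p"
    using assms by (intro powr_superadditive) auto
  finally have "(x + y) powr (1 / p) \<le> ((x powr (1 / p) + y powr (1 / p)) powr p) powr (1 / p)"
    using assms by (intro powr_mono2) auto
  also have "\<dots> = x powr (1 / p) + y powr (1 / p)" using assms by (simp add: powr_powr)
  finally show ?thesis .
qed

lemma powr_midpoint_convex:
  fixes a b p :: real
  assumes "0 \<le> a" "0 \<le> b" "1 \<le> p"
  shows "((a + b) / 2) powr p \<le> (a powr p + b powr p) / 2"
proof (cases "a = 0 \<or> b = 0")
  case True
  have "(c / 2) powr p \<le> c powr p / 2" if "0 \<le> c" for c :: real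
  proof -
    have "2 \<le> (2::real) powr p" using powr_mono[of 1 p 2] assms by simp
    then have "c powr p / 2 powr p \<le> c powr p / 2" by (intro divide_left_mono) auto
    then show ?thesis using that by (simp add: powr_divide)
  qed
  then show ?thesis using True assms by auto
next
  case False
  then have "0 < a" "0 < b" using assms by auto
  with convex_onD[OF powr_convex[OF assms(3)], of "1/2" a b] show ?thesis
    by (simp add: add_divide_distrib)
qed

lemma abs_add_powr_le:
  fixes u v p :: real
  assumes "1 \<le> p"
  shows "\<bar>u + v\<bar> powr p \<le> 2 powr (p - 1) * (\<bar>u\<bar> powr p + \<bar>v\<bar> powr p)"
proof -
  have "\<bar>u + v\<bar> powr p \<le> (\<bar>u\<bar> + \<bar>v\<bar>) powr p"
    using assms by (intro powr_mono2) auto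
  also have "\<dots> = (2 * ((\<bar>u\<bar> + \<bar>v\<bar>) / 2)) powr p"
    by (rule arg_cong[where f="\<lambda>x. x powr p"]) simp
  also have "\<dots> = 2 powr p * ((\<bar>u\<bar> + \<bar>v\<bar>) / 2) powr p"
    by (subst powr_mult) auto
  also have "\<dots> \<le> 2 powr p * ((\<bar>u\<bar> powr p + \<bar>v\<bar> powr p) / 2)"
    using assms by (intro mult_left_mono powr_midpoint_convex) auto
  also have "\<dots> = 2 powr (p - 1) * (\<bar>u\<bar> powr p + \<bar>v\<bar> powr p)"
    by (simp add: powr_diff)
  finally show ?thesis .
qed

lemma ennreal_abs_add_powr_le:
  fixes u v p :: real
  assumes "1 \<le> p"
  shows "ennreal (\<bar>u + v\<bar> powr p)
    \<le> ennreal (2 powr (p - 1)) * ennreal (\<bar>u\<bar> powr p) + ennreal (2 powr (p - 1)) * ennreal (\<bar>v\<bar> powr p)"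
proof -
  have "ennreal (\<bar>u + v\<bar> powr p) \<le> ennreal (2 powr (p - 1) * (\<bar>u\<bar> powr p + \<bar>v\<bar> powr p))"
    using abs_add_powr_le[OF assms] by (rule ennreal_leI)
  then show ?thesis by (simp add: ennreal_mult ennreal_plus distrib_left)
qed

section \<open>L^p step functions on measurable partitions\<close>

lemma memLp_nn_integral_finite:
  "memLp M p g \<Longrightarrow> (\<integral>\<^sup>+ x. ennreal (\<bar>g x\<bar> powr p) \<partial>M) < \<infinity>"
  unfolding memLp_def by (auto dest!: integrableD(2) simp: top.not_eq_extremum)

definition measurable_partition :: "'a measure \<Rightarrow> 'a set \<Rightarrow> nat \<Rightarrow> (nat \<Rightarrow> 'a set) \<Rightarrow> bool" where
  "measurable_partition M A l B \<longleftrightarrow>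
     (\<forall>i<l. B i \<in> sets M) \<and> disjoint_family_on B {..<l} \<and> (\<Union>i<l. B i) = A"

definition step_fun :: "(nat \<Rightarrow> real) \<Rightarrow> (nat \<Rightarrow> 'a set) \<Rightarrow> nat \<Rightarrow> 'a \<Rightarrow> real" where
  "step_fun m B l = (\<lambda>x. \<Sum>i<l. m i * indicator (B i) x)"

lemma sum_indicator_disjoint_eq:
  fixes g :: "nat \<Rightarrow> 'b::comm_semiring_1"
  assumes "disjoint_family_on B {..<l}" "j < l" "x \<in> B j"
  shows "(\<Sum>i<l. g i * indicator (B i) x) = g j"
proof -
  have "x \<notin> B i" if "i \<in> {..<l} - {j}" for i
    using assms that unfolding disjoint_family_on_def by blast
  then have "(\<Sum>i\<in>{..<l} - {j}. g i * indicator (B i) x) = 0"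
    by (intro sum.neutral) simp
  moreover have "(\<Sum>i<l. g i * indicator (B i) x)
      = g j * indicator (B j) x + (\<Sum>i\<in>{..<l} - {j}. g i * indicator (B i) x)"
    using assms by (subst sum.remove[of _ j]) auto
  ultimately show ?thesis using assms by simp
qed

lemma sum_indicator_outside:
  fixes g :: "nat \<Rightarrow> 'b::comm_semiring_1"
  assumes "x \<notin> (\<Union>i<l. B i)"
  shows "(\<Sum>i<l. g i * indicator (B i) x) = 0"
  using assms by (intro sum.neutral) auto

lemma comp_sum_indicator_disjoint:
  fixes g :: "nat \<Rightarrow> 'b::comm_semiring_1" and F :: "'b \<Rightarrow> 'c::comm_semiring_1"
  assumes "disjoint_family_on B {..<l}" "F 0 = 0"
  shows "F (\<Sum>i<l. g i * indicator (B i) x) = (\<Sum>i<l. F (g i) * indicator (B i) x)"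
proof (cases "\<exists>j<l. x \<in> B j")
  case True
  then obtain j where "j < l" "x \<in> B j" by auto
  then show ?thesis
    using sum_indicator_disjoint_eq[OF assms(1) \<open>j < l\<close> \<open>x \<in> B j\<close>, of g]
      sum_indicator_disjoint_eq[OF assms(1) \<open>j < l\<close> \<open>x \<in> B j\<close>, of "\<lambda>i. F (g i)"]
    by (simp only:)
next
  case False
  then show ?thesis using sum_indicator_outside[where x=x and l=l and B=B] assms(2) by auto
qed

lemma measurable_partition_subset: "measurable_partition M A l B \<Longrightarrow> i < l \<Longrightarrow> B i \<subseteq> A"
  unfolding measurable_partition_def by auto

lemma measurable_partition_finite:
  "measurable_partition M A l B \<Longrightarrow> A \<in> sets M \<Longrightarrow> emeasure M A < \<infinity> \<Longrightarrow> i < l \<Longrightarrow>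
     emeasure M (B i) < \<infinity>"
  by (meson emeasure_mono measurable_partition_def measurable_partition_subset order.strict_trans1)

lemma comp_step_fun:
  fixes G :: "real \<Rightarrow> 'b::comm_semiring_1"
  assumes part: "measurable_partition M A l B" and x: "x \<in> space M"
  shows "G (step_fun m B l x) = (\<Sum>i<l. G (m i) * indicator (B i) x) + G 0 * indicator (space M - A) x"
proof (cases "\<exists>j<l. x \<in> B j")
  case True
  then obtain j where j: "j < l" "x \<in> B j" by auto
  have dj: "disjoint_family_on B {..<l}" using part by (simp add: measurable_partition_def)
  have "step_fun m B l x = m j" unfolding step_fun_def by (rule sum_indicator_disjoint_eq[OF dj j])
  moreover have "(\<Sum>i<l. G (m i) * indicator (B i) x) = G (m j)"
    by (rule sum_indicator_disjoint_eq[OF dj j])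
  moreover have "x \<in> A" using part j by (auto simp: measurable_partition_def)
  ultimately show ?thesis by simp
next
  case False
  then have nx: "x \<notin> (\<Union>i<l. B i)" by auto
  have "step_fun m B l x = 0" unfolding step_fun_def by (rule sum_indicator_outside[OF nx])
  moreover have "(\<Sum>i<l. G (m i) * indicator (B i) x) = 0" by (rule sum_indicator_outside[OF nx])
  moreover have "x \<notin> A" using part nx by (auto simp: measurable_partition_def)
  ultimately show ?thesis using x by simp
qed

lemma GpkI:
  assumes "memLp M p h" "l \<le> k" "\<forall>i<l. A i \<in> sets M" "disjoint_family_on A {..<l}"
    "(\<Union>i<l. A i) = space M" "h = (\<lambda>x. \<Sum>i<l. a i * indicator (A i) x)"
  shows "h \<in> Gpk M p k"
  unfolding Gpk_def using assms by blast

lemma GpkE: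
  assumes "h \<in> Gpk M p k"
  obtains l A a where "memLp M p h" "l \<le> k" "\<forall>i<l. A i \<in> sets M" "disjoint_family_on A {..<l}"
    "(\<Union>i<l. A i) = space M" "h = (\<lambda>x. \<Sum>i<l. a i * indicator (A i) x)"
  using assms unfolding Gpk_def by blast

lemma Gpk_mono: "k \<le> k' \<Longrightarrow> Gpk M p k \<subseteq> Gpk M p k'"
  by (rule subsetI, erule GpkE) (rule GpkI, assumption, simp_all)

lemma zero_in_Gpk: "1 \<le> k \<Longrightarrow> (\<lambda>x. 0) \<in> Gpk M p k"
  by (rule GpkI[where A="\<lambda>_. space M" and a="\<lambda>_. 0"]) (auto simp: memLp_def disjoint_family_on_def)

lemma memLp_step_fun:
  assumes "measurable_partition M A l B" "A \<in> sets M" "emeasure M A < \<infinity>" "0 < p"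
  shows "memLp M p (step_fun m B l)"
proof -
  have B: "\<And>i. i < l \<Longrightarrow> B i \<in> sets M" "disjoint_family_on B {..<l}"
    using assms(1) unfolding measurable_partition_def by auto
  have "\<bar>step_fun m B l x\<bar> powr p = (\<Sum>i<l. \<bar>m i\<bar> powr p * indicator (B i) x)" for x
    unfolding step_fun_def using comp_sum_indicator_disjoint[OF B(2), of "\<lambda>t. \<bar>t\<bar> powr p" m x]
    by simp
  moreover have "integrable M (\<lambda>x. \<Sum>i<l. \<bar>m i\<bar> powr p * indicator (B i) x)"
    using B measurable_partition_finite[OF assms(1-3)]
    by (intro Bochner_Integration.integrable_sum) simp
  moreover have "step_fun m B l \<in> borel_measurable M"
    unfolding step_fun_def using B by measurable
  ultimately show ?thesis unfolding memLp_def by simp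
qed

lemma step_fun_in_Gpk_Suc:
  assumes part: "measurable_partition M A l B" and A: "A \<in> sets M" "emeasure M A < \<infinity>" "0 < p"
  shows "step_fun m B l \<in> Gpk M p (Suc l)"
proof -
  define A' where "A' i = (if i < l then B i else space M - A)" for i
  define a' where "a' i = (if i < l then m i else 0)" for i
  have "A \<subseteq> space M" using A sets.sets_into_space by auto
  then have cover: "(\<Union>i<Suc l. A' i) = space M"
    using part by (auto simp: A'_def lessThan_Suc measurable_partition_def)
  have disj: "disjoint_family_on A' {..<Suc l}"
    using part measurable_partition_subset[OF part]
    unfolding disjoint_family_on_def measurable_partition_def A'_def by (auto 4 3)
  have sets: "\<forall>i<Suc l. A' i \<in> sets M"
    using part A by (auto simp: A'_def measurable_partition_def)
  have eq: "step_fun m B l = (\<lambda>x. \<Sum>i<Suc l. a' i * indicator (A' i) x)"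
    unfolding step_fun_def by (auto simp: A'_def a'_def intro!: sum.cong)
  show ?thesis by (rule GpkI[OF memLp_step_fun[OF assms] _ sets disj cover eq]) simp
qed

lemma step_fun_in_Gpk_zero_piece:
  assumes part: "measurable_partition M A l B" and A: "A \<in> sets M" "emeasure M A < \<infinity>" "0 < p"
    and j: "j < l" "m j = 0"
  shows "step_fun m B l \<in> Gpk M p l"
proof -
  define A' where "A' i = (if i = j then B j \<union> (space M - A) else B i)" for i
  have "A \<subseteq> space M" using A sets.sets_into_space by auto
  then have cover: "(\<Union>i<l. A' i) = space M"
    using part j by (auto simp: A'_def measurable_partition_def split: if_splits)
  have disj: "disjoint_family_on A' {..<l}"
    using part measurable_partition_subset[OF part]
    unfolding disjoint_family_on_def measurable_partition_def A'_def by (auto 4 3)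
  have sets: "\<forall>i<l. A' i \<in> sets M"
    using part A j by (auto simp: A'_def measurable_partition_def)
  have eq: "step_fun m B l = (\<lambda>x. \<Sum>i<l. m i * indicator (A' i) x)"
    unfolding step_fun_def using j by (intro ext sum.cong refl) (auto simp: A'_def)
  show ?thesis by (rule GpkI[OF memLp_step_fun[OF assms(1-4)] _ sets disj cover eq]) simp
qed

lemma step_fun_in_Gpk:
  assumes "measurable_partition M (space M) l B" "emeasure M (space M) < \<infinity>" "0 < p"
  shows "step_fun m B l \<in> Gpk M p l"
  using assms(1) by (intro GpkI[OF memLp_step_fun[OF assms(1) sets.top assms(2,3)] order_refl])
    (auto simp: measurable_partition_def step_fun_def)

lemma Lp_dist_le:
  assumes "(\<integral>\<^sup>+ x. ennreal (\<bar>f x - h x\<bar> powr p) \<partial>M) \<le> ennreal X" "0 \<le> X" "0 < p"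
  shows "Lp_dist M p f h \<le> X powr (1 / p)"
proof -
  have "enn2real (\<integral>\<^sup>+ x. ennreal (\<bar>f x - h x\<bar> powr p) \<partial>M) \<le> X"
    using enn2real_mono[OF assms(1)] assms(2) by simp
  then show ?thesis unfolding Lp_dist_def using assms by (intro powr_mono2) auto
qed

lemma Lp_dist_le_add:
  assumes "(\<integral>\<^sup>+ x. ennreal (\<bar>f x - h x\<bar> powr p) \<partial>M) \<le> ennreal (X + Y)" "0 \<le> X" "0 \<le> Y" "1 \<le> p"
  shows "Lp_dist M p f h \<le> X powr (1 / p) + Y powr (1 / p)"
proof -
  have "Lp_dist M p f h \<le> (X + Y) powr (1 / p)" using assms by (intro Lp_dist_le) auto
  also have "\<dots> \<le> X powr (1 / p) + Y powr (1 / p)" using assms by (intro powr_inverse_subadditive)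
  finally show ?thesis .
qed

lemma Dpk_le_Lp_dist: "h \<in> Gpk M p k \<Longrightarrow> Dpk M p k f \<le> Lp_dist M p f h"
  unfolding Dpk_def by (rule cInf_lower) (auto intro!: bdd_belowI[of _ 0] simp: Lp_dist_def)

lemma Dpk_greatest:
  "1 \<le> k \<Longrightarrow> (\<And>h. h \<in> Gpk M p k \<Longrightarrow> c \<le> Lp_dist M p f h) \<Longrightarrow> c \<le> Dpk M p k f"
  unfolding Dpk_def by (rule cInf_greatest) (use zero_in_Gpk[of k M p] in blast)+

lemma varp_fam_nonneg: "0 \<le> varp_fam M p f l B"
  unfolding varp_fam_def by simp

lemma varp_fam_powr: "0 < p \<Longrightarrow> varp_fam M p f l B powr p = (\<Sum>i<l. varp M p f (B i) powr p)"
  unfolding varp_fam_def by (simp add: powr_powr sum_nonneg)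

lemma Varpk_on_altdef:
  "Varpk_on M p k f A = Inf {varp_fam M p f l B | l B. l \<le> k \<and> measurable_partition M A l B}"
  unfolding Varpk_on_def measurable_partition_def by (rule arg_cong[where f=Inf]) blast

lemma measurable_partition_single: "A \<in> sets M \<Longrightarrow> measurable_partition M A 1 (\<lambda>_. A)"
  unfolding measurable_partition_def by (auto simp: disjoint_family_on_def)

lemma Varpk_on_le_varp_fam:
  "measurable_partition M A l B \<Longrightarrow> l \<le> k \<Longrightarrow> Varpk_on M p k f A \<le> varp_fam M p f l B"
  unfolding Varpk_on_altdef
  by (rule cInf_lower) (auto intro!: bdd_belowI[of _ 0] simp: varp_fam_nonneg)

lemma Varpk_on_greatest:
  assumes "1 \<le> k" "A \<in> sets M"
    and "\<And>l B. l \<le> k \<Longrightarrow> measurable_partition M A l B \<Longrightarrow> c \<le> varp_fam M p f l B"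
  shows "c \<le> Varpk_on M p k f A"
  unfolding Varpk_on_altdef
  using assms measurable_partition_single[OF assms(2)] by (intro cInf_greatest) blast+

lemma exists_partition_varp_fam_less:
  assumes "1 \<le> k" "A \<in> sets M" "0 < e"
  obtains l B where "l \<le> k" "measurable_partition M A l B"
    "varp_fam M p f l B < Varpk_on M p k f A + e"
proof -
  let ?P = "{varp_fam M p f l B | l B. l \<le> k \<and> measurable_partition M A l B}"
  have "?P \<noteq> {}" using assms measurable_partition_single[OF assms(2)] by blast
  moreover have "Inf ?P < Varpk_on M p k f A + e" using assms(3) by (simp add: Varpk_on_altdef)
  ultimately obtain v where "v \<in> ?P" "v < Varpk_on M p k f A + e" by (rule cInf_lessD[elim_format]) blast
  then show ?thesis using that by blast
qed

lemma Varpk_least: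
  assumes "\<And>A. A \<in> sets M \<Longrightarrow> emeasure M A < \<infinity> \<Longrightarrow> Varpk_on M p k f A \<le> c"
  shows "Varpk M p k f \<le> c"
  unfolding Varpk_def using assms by (intro cSup_least) (auto intro!: exI[of _ "{}"])

section \<open>Averages and sets of large finite measure\<close>

lemma exists_le_average:
  assumes G: "G \<in> borel_measurable M" and B: "B \<in> sets M" "0 < emeasure M B" "emeasure M B < \<infinity>"
    and avg: "(\<integral>\<^sup>+ y. G y * indicator B y \<partial>M) \<le> ennreal c * emeasure M B"
  obtains y where "y \<in> B" "G y \<le> ennreal c"
proof -
  have "\<exists>y\<in>B. G y \<le> ennreal c"
  proof (rule ccontr)
    assume "\<not> (\<exists>y\<in>B. G y \<le> ennreal c)"
    then have gt: "\<And>y. y \<in> B \<Longrightarrow> ennreal c < G y" by (auto simp: not_le)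
    have "(\<integral>\<^sup>+ y. ennreal c * indicator B y \<partial>M) < (\<integral>\<^sup>+ y. G y * indicator B y \<partial>M)"
    proof (rule nn_integral_less)
      show "(\<integral>\<^sup>+ y. ennreal c * indicator B y \<partial>M) \<noteq> \<infinity>"
        using B by (simp add: nn_integral_cmult_indicator ennreal_mult_eq_top_iff)
      show "AE x in M. ennreal c * indicator B x \<le> G x * indicator B x"
        using gt by (auto simp: indicator_def intro!: less_imp_le)
      show "\<not> (AE x in M. G x * indicator B x \<le> ennreal c * indicator B x)"
      proof
        assume "AE x in M. G x * indicator B x \<le> ennreal c * indicator B x"
        then have "AE x in M. x \<notin> B"
          by eventually_elim (use gt in \<open>force simp: indicator_def not_le\<close>)
        then have "emeasure M B = 0"
          using B by (subst (asm) AE_iff_measurable[of B]) (auto dest: sets.sets_into_space)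
        then show False using B(2) by simp
      qed
    qed (use B G in auto)
    with avg show False using B by (simp add: nn_integral_cmult_indicator)
  qed
  then show ?thesis using that by blast
qed

lemma exists_subset_emeasure_eq_SUP:
  assumes E: "E \<in> sets M"
  obtains G where "G \<in> sets M" "G \<subseteq> E"
    "emeasure M G = (SUP F\<in>{F\<in>sets M. F \<subseteq> E \<and> emeasure M F < \<infinity>}. emeasure M F)"
proof -
  define \<F> where "\<F> = {F\<in>sets M. F \<subseteq> E \<and> emeasure M F < \<infinity>}"
  have "{} \<in> \<F>" unfolding \<F>_def by simp
  then obtain g :: "nat \<Rightarrow> ennreal" where g: "range g \<subseteq> emeasure M ` \<F>" "(SUP F\<in>\<F>. emeasure M F) = Sup (range g)"
    using ennreal_SUP_countable_SUP[of "\<F>" "emeasure M"] by auto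
  then have "\<forall>n. \<exists>F. F \<in> \<F> \<and> g n = emeasure M F" by auto
  then obtain F where F: "\<And>n. F n \<in> \<F>" "\<And>n. g n = emeasure M (F n)"
    by (auto dest!: choice)
  have Fs: "\<And>n. F n \<in> sets M" "\<And>n. F n \<subseteq> E" "\<And>n. emeasure M (F n) < \<infinity>"
    using F(1) unfolding \<F>_def by auto
  define G where "G n = (\<Union>i\<le>n. F i)" for n
  have GF: "G n \<in> \<F>" for n
  proof -
    have "emeasure M (G n) \<le> (\<Sum>i\<le>n. emeasure M (F i))"
      unfolding G_def by (rule emeasure_subadditive_finite) (use Fs in auto)
    also have "\<dots> < \<infinity>" using Fs(3) by simp
    finally show ?thesis unfolding \<F>_def G_def using Fs by auto
  qed
  have inc: "incseq G" unfolding G_def incseq_def by (auto intro: order_trans)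
  have Us: "(\<Union>n. G n) \<in> sets M" using GF unfolding \<F>_def by auto
  have "emeasure M (\<Union>n. G n) = (SUP n. emeasure M (G n))"
    using GF inc by (intro SUP_emeasure_incseq[symmetric]) (auto simp: \<F>_def)
  also have "\<dots> \<le> (SUP F\<in>\<F>. emeasure M F)" by (intro SUP_least SUP_upper GF)
  finally have le: "emeasure M (\<Union>n. G n) \<le> (SUP F\<in>\<F>. emeasure M F)" .
  have "F n \<subseteq> (\<Union>n. G n)" for n unfolding G_def by auto
  then have "(SUP F\<in>\<F>. emeasure M F) \<le> emeasure M (\<Union>n. G n)"
    unfolding g(2) using F(2) Us by (auto intro!: SUP_least emeasure_mono)
  with le have "emeasure M (\<Union>n. G n) = (SUP F\<in>\<F>. emeasure M F)" by (rule antisym)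
  moreover have "(\<Union>n. G n) \<subseteq> E" unfolding G_def using Fs(2) by auto
  ultimately show ?thesis using that Us unfolding \<F>_def by blast
qed

lemma nn_integral_indicator_le_Int_Diff:
  assumes [measurable]: "g \<in> borel_measurable M" "B \<in> sets M" "S \<in> sets M"
  shows "(\<integral>\<^sup>+ x. g x * indicator B x \<partial>M)
    \<le> (\<integral>\<^sup>+ x. g x * indicator (B \<inter> S) x \<partial>M) + (\<integral>\<^sup>+ x. g x * indicator (space M - S) x \<partial>M)"
proof -
  have "(\<integral>\<^sup>+ x. g x * indicator B x \<partial>M)
      \<le> (\<integral>\<^sup>+ x. g x * indicator (B \<inter> S) x + g x * indicator (space M - S) x \<partial>M)"
    by (intro nn_integral_mono) (auto simp: indicator_def)
  also have "\<dots> = (\<integral>\<^sup>+ x. g x * indicator (B \<inter> S) x \<partial>M) + (\<integral>\<^sup>+ x. g x * indicator (space M - S) x \<partial>M)"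
    by (intro nn_integral_add) auto
  finally show ?thesis .
qed

text \<open>Otherwise a measurable G \<subseteq> E attaining the supremum of the finite measures of subsets of E
  leaves a remainder E - G of infinite measure; E - G is not an atom, so it contains a set of positive
  finite measure that could be added to G.\<close>

lemma exists_finite_subset_ge:
  assumes noatom: "\<not> (\<exists>A. is_atom M A \<and> emeasure M A = \<infinity>)"
    and E: "E \<in> sets M" "emeasure M E = \<infinity>"
  obtains D where "D \<in> sets M" "D \<subseteq> E" "ennreal R \<le> emeasure M D" "emeasure M D < \<infinity>"
proof -
  define \<F> where "\<F> = {F\<in>sets M. F \<subseteq> E \<and> emeasure M F < \<infinity>}"
  define s where "s = (SUP F\<in>\<F>. emeasure M F)"
  have "ennreal R < s"
  proof (rule ccontr)
    assume "\<not> ennreal R < s"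
    then have "s \<le> ennreal R" by (simp add: not_less)
    then have s_fin: "s < \<infinity>" by (metis ennreal_less_top infinity_ennreal_def le_less_trans)
    obtain G where G: "G \<in> sets M" "G \<subseteq> E" "emeasure M G = s"
      using exists_subset_emeasure_eq_SUP[OF E(1)] unfolding s_def \<F>_def by blast
    have "emeasure M E \<le> emeasure M G + emeasure M (E - G)"
      using E G by (metis Diff_partition emeasure_subadditive sets.Diff order_refl)
    then have rest: "emeasure M (E - G) = \<infinity>" using E(2) G(3) s_fin by (auto simp: top_unique)
    then have "\<not> is_atom M (E - G)" using noatom by auto
    then obtain B where B: "B \<in> sets M" "B \<subseteq> E - G" "emeasure M B < \<infinity>" "emeasure M B \<noteq> 0"
      using rest E G unfolding is_atom_def by auto
    then have GB: "emeasure M (G \<union> B) = s + emeasure M B"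
      using G by (subst plus_emeasure[symmetric]) auto
    moreover have "emeasure M (G \<union> B) \<le> s"
      unfolding s_def using B G s_fin GB by (intro SUP_upper) (auto simp: \<F>_def)
    ultimately show False using B(4) s_fin by (simp add: ennreal_add_left_cancel_le top_unique)
  qed
  then obtain D where "D \<in> \<F>" "ennreal R < emeasure M D" unfolding s_def by (auto simp: less_SUP_iff)
  then show ?thesis using that unfolding \<F>_def by auto
qed

lemma exists_large_piece:
  assumes part: "measurable_partition M A l B" and "l \<le> k" "0 < emeasure M A"
  obtains j where "j < l" "emeasure M A \<le> of_nat k * emeasure M (B j)"
proof -
  have "l \<noteq> 0" using part assms(3) by (cases "l = 0") (auto simp: measurable_partition_def)
  let ?X = "(\<lambda>i. emeasure M (B i)) ` {..<l}"
  have "Max ?X \<in> ?X" using \<open>l \<noteq> 0\<close> by (intro Max_in) auto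
  then obtain j where j: "j < l" "emeasure M (B j) = Max ?X" by auto
  have max: "\<And>i. i < l \<Longrightarrow> emeasure M (B i) \<le> emeasure M (B j)"
    unfolding j(2) by (intro Max_ge) auto
  have "(\<Sum>i<l. emeasure M (B i)) = emeasure M A"
    using part by (auto simp: measurable_partition_def intro!: sum_emeasure)
  then have "emeasure M A = (\<Sum>i<l. emeasure M (B i))" ..
  also have "\<dots> \<le> of_nat l * emeasure M (B j)"
    using sum_mono[of "{..<l}" "\<lambda>i. emeasure M (B i)" "\<lambda>_. emeasure M (B j)"] max by simp
  also have "\<dots> \<le> of_nat k * emeasure M (B j)" using assms(2) by (intro mult_right_mono) auto
  finally show ?thesis using that j(1) by blast
qed

text \<open>A piece of largest measure works: its measure is at least \<mu>(S \<union> D)/k, which dwarfs \<mu>(S).\<close>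

lemma exists_piece_mostly_in:
  assumes part: "measurable_partition M (S \<union> D) l B" and "l \<le> k"
    and S: "S \<in> fmeasurable M" and D: "D \<in> fmeasurable M"
    and small: "real k * measure M S < t * measure M D" and t: "0 < t"
  obtains j where "j < l" "B j \<in> fmeasurable M" "0 < measure M (B j)"
    "(1 - t) * measure M (B j) \<le> measure M (B j \<inter> D)"
proof -
  have SD: "S \<union> D \<in> fmeasurable M" using S D by (rule fmeasurable.Un)
  have "0 \<le> real k * measure M S" by simp
  then have "0 < t * measure M D" using small by linarith
  then have "0 < emeasure M D" using t D by (simp add: zero_less_mult_iff emeasure_eq_measure2)
  also have "emeasure M D \<le> emeasure M (S \<union> D)" using SD by (intro emeasure_mono) auto
  finally obtain j where j: "j < l" and big: "emeasure M (S \<union> D) \<le> of_nat k * emeasure M (B j)"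
    using exists_large_piece[OF part assms(2)] by blast
  have Bj: "B j \<in> fmeasurable M"
    using part j by (intro fmeasurableI2[OF SD]) (auto simp: measurable_partition_def)
  have "measure M D \<le> measure M (S \<union> D)"
    using SD D by (intro measure_mono_fmeasurable) auto
  moreover have "measure M (S \<union> D) \<le> real k * measure M (B j)"
    using big SD Bj by (simp add: emeasure_eq_measure2 ennreal_of_nat_eq_real_of_nat
        ennreal_mult[symmetric])
  ultimately have "t * measure M D \<le> t * (real k * measure M (B j))"
    using t by (intro mult_left_mono) auto
  with small have "real k * measure M S < real k * (t * measure M (B j))" by (simp add: mult_ac)
  then have St: "measure M S < t * measure M (B j)" by (simp add: mult_less_cancel_left)
  then have "0 < t * measure M (B j)" using measure_nonneg[of M S] by linarith
  then have pos: "0 < measure M (B j)" using t by (simp add: zero_less_mult_iff)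
  have "B j \<subseteq> S \<union> (B j \<inter> D)" using part j by (auto simp: measurable_partition_def)
  then have "measure M (B j) \<le> measure M (S \<union> (B j \<inter> D))"
    using S D Bj by (intro measure_mono_fmeasurable fmeasurable.Un fmeasurable_Int_fmeasurable) auto
  also have "\<dots> \<le> measure M S + measure M (B j \<inter> D)" using S D Bj by (intro measure_Un_le) auto
  finally have "(1 - t) * measure M (B j) \<le> measure M (B j \<inter> D)" using St by (simp add: algebra_simps)
  with that j Bj pos show ?thesis by blast
qed

section \<open>The variation of an L^p function\<close>

locale Lp_function =
  fixes M :: "'a measure" and p :: real and f :: "'a \<Rightarrow> real"
  assumes one_le_p: "1 \<le> p" and memLp_f: "memLp M p f"
begin

lemma p_pos: "0 < p"
  using one_le_p by simp

lemma measurable_f[measurable]: "f \<in> borel_measurable M"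
  using memLp_f unfolding memLp_def by auto

lemma nn_integral_powr_indicator_finite:
  "(\<integral>\<^sup>+ x. ennreal (\<bar>f x\<bar> powr p) * indicator A x \<partial>M) < \<infinity>"
proof -
  have "(\<integral>\<^sup>+ x. ennreal (\<bar>f x\<bar> powr p) * indicator A x \<partial>M) \<le> (\<integral>\<^sup>+ x. ennreal (\<bar>f x\<bar> powr p) \<partial>M)"
    by (intro nn_integral_mono) (simp add: indicator_def)
  then show ?thesis using memLp_nn_integral_finite[OF memLp_f] by (rule le_less_trans)
qed

definition var_integral :: "'a set \<Rightarrow> ennreal" where
  "var_integral B =
     (\<integral>\<^sup>+ x. (\<integral>\<^sup>+ y. ennreal (\<bar>f x - f y\<bar> powr p) * indicator B y \<partial>M) * indicator B x \<partial>M)"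

lemma var_integral_le:
  assumes B: "B \<in> sets M"
  shows "var_integral B
    \<le> ennreal (2 powr p) * emeasure M B * (\<integral>\<^sup>+ x. ennreal (\<bar>f x - a\<bar> powr p) * indicator B x \<partial>M)"
proof -
  let ?c = "ennreal (2 powr (p - 1))"
  let ?g = "\<lambda>x. ennreal (\<bar>f x - a\<bar> powr p)"
  let ?I = "\<integral>\<^sup>+ x. ?g x * indicator B x \<partial>M"
  have pointwise: "ennreal (\<bar>f x - f y\<bar> powr p) \<le> ?c * ?g x + ?c * ?g y" for x y
    using ennreal_abs_add_powr_le[OF one_le_p, of "f x - a" "a - f y"]
    by (simp add: abs_minus_commute[of a])
  have inner: "(\<integral>\<^sup>+ y. (?c * ?g x + ?c * ?g y) * indicator B y \<partial>M) = ?c * ?g x * emeasure M B + ?c * ?I"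
    for x
  proof -
    have "(\<integral>\<^sup>+ y. (?c * ?g x + ?c * ?g y) * indicator B y \<partial>M)
      = (\<integral>\<^sup>+ y. ?c * ?g x * indicator B y + ?c * (?g y * indicator B y) \<partial>M)"
      by (intro nn_integral_cong) (simp add: algebra_simps)
    also have "\<dots> = ?c * ?g x * emeasure M B + ?c * ?I"
      using B by (subst nn_integral_add) (auto simp: nn_integral_cmult nn_integral_cmult_indicator)
    finally show ?thesis .
  qed
  have "var_integral B
      \<le> (\<integral>\<^sup>+ x. (\<integral>\<^sup>+ y. (?c * ?g x + ?c * ?g y) * indicator B y \<partial>M) * indicator B x \<partial>M)"
    unfolding var_integral_def by (intro nn_integral_mono mult_right_mono) (auto intro!: pointwise)
  also have "\<dots> = (\<integral>\<^sup>+ x. (?c * emeasure M B) * (?g x * indicator B x) + (?c * ?I) * indicator B x \<partial>M)"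
    unfolding inner by (intro nn_integral_cong) (simp add: algebra_simps)
  also have "\<dots> = ?c * emeasure M B * ?I + ?c * ?I * emeasure M B"
    using B by (subst nn_integral_add) (auto simp: nn_integral_cmult nn_integral_cmult_indicator)
  also have "\<dots> = (?c * 2) * emeasure M B * ?I" by (simp add: mult_ac mult_2[symmetric])
  also have "?c * 2 = ennreal (2 powr (p - 1) * 2)" by (simp add: ennreal_mult'')
  also have "2 powr (p - 1) * 2 = (2::real) powr p" by (simp add: powr_diff)
  finally show ?thesis .
qed

lemma var_integral_finite:
  assumes "B \<in> sets M" "emeasure M B < \<infinity>"
  shows "var_integral B < \<infinity>"
proof -
  have "var_integral B \<le> ennreal (2 powr p) * emeasure M B * (\<integral>\<^sup>+ x. ennreal (\<bar>f x - 0\<bar> powr p) * indicator B x \<partial>M)"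
    by (rule var_integral_le[OF assms(1)])
  also have "\<dots> < \<infinity>"
    using assms nn_integral_powr_indicator_finite[of B] by (simp add: ennreal_mult_less_top)
  finally show ?thesis .
qed

lemma var_integral_eq_varp:
  assumes B: "B \<in> sets M" "emeasure M B < \<infinity>"
  shows "var_integral B = ennreal (varp M p f B powr p * measure M B)"
proof (cases "emeasure M B > 0")
  case True
  then have pos: "0 < measure M B" using B by (simp add: emeasure_eq_ennreal_measure)
  have "varp M p f B powr p = enn2real (var_integral B) / measure M B"
    using True one_le_p unfolding varp_def var_integral_def by (simp add: powr_powr)
  then have "varp M p f B powr p * measure M B = enn2real (var_integral B)" using pos by simp
  then show ?thesis using var_integral_finite[OF B] by simp
next
  case False
  then have "B \<in> null_sets M" using B by (simp add: null_sets_def)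
  then have "var_integral B = 0" unfolding var_integral_def by (rule nn_integral_null_set)
  then show ?thesis using False unfolding varp_def by simp
qed

lemma varp_powr_le:
  assumes B: "B \<in> sets M" "emeasure M B < \<infinity>"
  shows "ennreal (varp M p f B powr p)
    \<le> ennreal (2 powr p) * (\<integral>\<^sup>+ x. ennreal (\<bar>f x - a\<bar> powr p) * indicator B x \<partial>M)"
proof (cases "emeasure M B > 0")
  case True
  let ?mB = "ennreal (measure M B)"
  have mB: "emeasure M B = ?mB" using B by (simp add: emeasure_eq_ennreal_measure)
  have "?mB * ennreal (varp M p f B powr p) = var_integral B"
    using var_integral_eq_varp[OF B] by (simp add: ennreal_mult mult.commute)
  also have "\<dots> \<le> ?mB * (ennreal (2 powr p) * (\<integral>\<^sup>+ x. ennreal (\<bar>f x - a\<bar> powr p) * indicator B x \<partial>M))"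
    using var_integral_le[OF B(1)] by (simp add: mB mult_ac)
  finally show ?thesis using True by (simp add: mB ennreal_mult_le_mult_iff)
qed (simp add: varp_def)

lemma borel_measurable_nn_integral_diff_powr:
  assumes B: "B \<in> sets M" "emeasure M B < \<infinity>"
  shows "(\<lambda>x. \<integral>\<^sup>+ y. ennreal (\<bar>f x - f y\<bar> powr p) * indicator B y \<partial>M) \<in> borel_measurable M"
proof -
  have Bs: "B \<subseteq> space M" using B sets.sets_into_space by auto
  have "finite_measure (restrict_space M B)"
    using B Bs by (intro finite_measureI) (auto simp: space_restrict_space emeasure_restrict_space Int_absorb2)
  then interpret R: finite_measure "restrict_space M B" .
  have eq: "(\<integral>\<^sup>+ y. ennreal (\<bar>f x - f y\<bar> powr p) * indicator B y \<partial>M)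
      = (\<integral>\<^sup>+ y. ennreal (\<bar>f x - f y\<bar> powr p) \<partial>restrict_space M B)" for x
    using B Bs by (subst nn_integral_restrict_space) (auto simp: Int_absorb2)
  have [measurable]: "f \<in> borel_measurable (restrict_space M B)"
    by (rule measurable_restrict_space1) simp
  have "(\<lambda>x. \<integral>\<^sup>+ y. ennreal (\<bar>f x - f y\<bar> powr p) \<partial>restrict_space M B) \<in> borel_measurable M"
    by measurable
  then show ?thesis unfolding eq .
qed

text \<open>The function G below has mean var_p(f,B)^p over B, so G y is at most this mean for some
  y \<in> B; the constant f y then approximates f on B.\<close>

lemma exists_constant_le_varp:
  assumes B: "B \<in> sets M" "emeasure M B < \<infinity>"
  obtains c where "(\<integral>\<^sup>+ x. ennreal (\<bar>f x - c\<bar> powr p) * indicator B x \<partial>M) \<le> ennreal (varp M p f B powr p)"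
proof (cases "emeasure M B > 0")
  case False
  then have "B \<in> null_sets M" using B by (simp add: null_sets_def)
  then show ?thesis using that by (simp add: nn_integral_null_set)
next
  case True
  define G where "G x = (\<integral>\<^sup>+ y. ennreal (\<bar>f x - f y\<bar> powr p) * indicator B y \<partial>M)" for x
  have [measurable]: "G \<in> borel_measurable M"
    unfolding G_def by (rule borel_measurable_nn_integral_diff_powr[OF B])
  define c where "c = varp M p f B powr p"
  have "ennreal c * emeasure M B = var_integral B"
    using var_integral_eq_varp[OF B] B by (simp add: c_def emeasure_eq_ennreal_measure ennreal_mult)
  also have "var_integral B = (\<integral>\<^sup>+ y. G y * indicator B y \<partial>M)" unfolding G_def var_integral_def ..
  finally obtain y where "y \<in> B" "G y \<le> ennreal c"
    using exists_le_average[of G M B c] B True by auto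
  moreover have "(\<integral>\<^sup>+ x. ennreal (\<bar>f x - f y\<bar> powr p) * indicator B x \<partial>M) = G y"
    unfolding G_def by (intro nn_integral_cong) (simp add: abs_minus_commute)
  ultimately have "(\<integral>\<^sup>+ x. ennreal (\<bar>f x - f y\<bar> powr p) * indicator B x \<partial>M) \<le> ennreal c" by simp
  then show ?thesis using that unfolding c_def by blast
qed

lemma exists_constants_le_varp:
  assumes "measurable_partition M A l B" "A \<in> sets M" "emeasure M A < \<infinity>"
  obtains m where "\<And>i. i < l \<Longrightarrow>
    (\<integral>\<^sup>+ x. ennreal (\<bar>f x - m i\<bar> powr p) * indicator (B i) x \<partial>M) \<le> ennreal (varp M p f (B i) powr p)"
proof -
  have "\<exists>c. (\<integral>\<^sup>+ x. ennreal (\<bar>f x - c\<bar> powr p) * indicator (B i) x \<partial>M)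
      \<le> ennreal (varp M p f (B i) powr p)" if "i < l" for i
  proof -
    have "B i \<in> sets M" using assms(1) that by (simp add: measurable_partition_def)
    then show ?thesis
      using measurable_partition_finite[OF assms that] by (rule exists_constant_le_varp) blast
  qed
  then have "\<forall>i. \<exists>c. i < l \<longrightarrow>
      (\<integral>\<^sup>+ x. ennreal (\<bar>f x - c\<bar> powr p) * indicator (B i) x \<partial>M) \<le> ennreal (varp M p f (B i) powr p)"
    by blast
  then have "\<exists>m. \<forall>i. i < l \<longrightarrow>
      (\<integral>\<^sup>+ x. ennreal (\<bar>f x - m i\<bar> powr p) * indicator (B i) x \<partial>M) \<le> ennreal (varp M p f (B i) powr p)"
    by (rule choice)
  then show ?thesis using that by blast
qed

lemma nn_integral_diff_powr_finite:
  assumes "memLp M p g"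
  shows "(\<integral>\<^sup>+ x. ennreal (\<bar>f x - g x\<bar> powr p) \<partial>M) < \<infinity>"
proof -
  let ?c = "ennreal (2 powr (p - 1))"
  have [measurable]: "g \<in> borel_measurable M" using assms unfolding memLp_def by auto
  have "(\<integral>\<^sup>+ x. ennreal (\<bar>f x - g x\<bar> powr p) \<partial>M)
      \<le> (\<integral>\<^sup>+ x. ?c * ennreal (\<bar>f x\<bar> powr p) + ?c * ennreal (\<bar>g x\<bar> powr p) \<partial>M)"
    using ennreal_abs_add_powr_le[OF one_le_p, of "f _" "- g _"] by (intro nn_integral_mono) simp
  also have "\<dots> = ?c * (\<integral>\<^sup>+ x. ennreal (\<bar>f x\<bar> powr p) \<partial>M) + ?c * (\<integral>\<^sup>+ x. ennreal (\<bar>g x\<bar> powr p) \<partial>M)"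
    by (simp add: nn_integral_add nn_integral_cmult)
  also have "\<dots> < \<infinity>"
    using memLp_nn_integral_finite[OF memLp_f] memLp_nn_integral_finite[OF assms]
    by (simp add: ennreal_mult_less_top)
  finally show ?thesis .
qed

lemma nn_integral_step_fun_error:
  assumes part: "measurable_partition M A l B" and A: "A \<in> sets M"
  shows "(\<integral>\<^sup>+ x. ennreal (\<bar>f x - step_fun m B l x\<bar> powr p) \<partial>M)
    = (\<Sum>i<l. \<integral>\<^sup>+ x. ennreal (\<bar>f x - m i\<bar> powr p) * indicator (B i) x \<partial>M)
      + (\<integral>\<^sup>+ x. ennreal (\<bar>f x\<bar> powr p) * indicator (space M - A) x \<partial>M)"
proof -
  have Bs: "\<And>i. i < l \<Longrightarrow> B i \<in> sets M" using part unfolding measurable_partition_def by auto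
  have pointwise: "ennreal (\<bar>f x - step_fun m B l x\<bar> powr p)
      = (\<Sum>i<l. ennreal (\<bar>f x - m i\<bar> powr p) * indicator (B i) x)
        + ennreal (\<bar>f x\<bar> powr p) * indicator (space M - A) x"
    if "x \<in> space M" for x
    using comp_step_fun[OF part that, of "\<lambda>c. ennreal (\<bar>f x - c\<bar> powr p)" m] by simp
  have mi: "(\<lambda>x. ennreal (\<bar>f x - m i\<bar> powr p) * indicator (B i) x) \<in> borel_measurable M"
    if "i < l" for i
    using Bs[OF that] by measurable
  have "(\<integral>\<^sup>+ x. ennreal (\<bar>f x - step_fun m B l x\<bar> powr p) \<partial>M)
    = (\<integral>\<^sup>+ x. (\<Sum>i<l. ennreal (\<bar>f x - m i\<bar> powr p) * indicator (B i) x)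
        + ennreal (\<bar>f x\<bar> powr p) * indicator (space M - A) x \<partial>M)"
    by (intro nn_integral_cong pointwise)
  also have "\<dots> = (\<integral>\<^sup>+ x. (\<Sum>i<l. ennreal (\<bar>f x - m i\<bar> powr p) * indicator (B i) x) \<partial>M)
      + (\<integral>\<^sup>+ x. ennreal (\<bar>f x\<bar> powr p) * indicator (space M - A) x \<partial>M)"
  proof (rule nn_integral_add)
    show "(\<lambda>x. \<Sum>i<l. ennreal (\<bar>f x - m i\<bar> powr p) * indicator (B i) x) \<in> borel_measurable M"
      by (rule borel_measurable_sum) (rule mi, simp)
    show "(\<lambda>x. ennreal (\<bar>f x\<bar> powr p) * indicator (space M - A) x) \<in> borel_measurable M"
      using A by measurable
  qed
  also have "(\<integral>\<^sup>+ x. (\<Sum>i<l. ennreal (\<bar>f x - m i\<bar> powr p) * indicator (B i) x) \<partial>M)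
      = (\<Sum>i<l. \<integral>\<^sup>+ x. ennreal (\<bar>f x - m i\<bar> powr p) * indicator (B i) x \<partial>M)"
    by (rule nn_integral_sum) (rule mi, simp)
  finally show ?thesis .
qed

subsection \<open>The upper bound\<close>

lemma sum_nn_integral_le_of_constant_on_pieces:
  fixes B :: "nat \<Rightarrow> 'a set"
  assumes "\<forall>i<l. B i \<in> sets M" "disjoint_family_on B {..<l}"
    and "\<And>i x. i < l \<Longrightarrow> x \<in> B i \<Longrightarrow> g x = a i"
  shows "(\<Sum>i<l. \<integral>\<^sup>+ x. ennreal (\<bar>f x - a i\<bar> powr p) * indicator (B i) x \<partial>M)
    \<le> (\<integral>\<^sup>+ x. ennreal (\<bar>f x - g x\<bar> powr p) \<partial>M)"
proof -
  have mi: "(\<lambda>x. ennreal (\<bar>f x - a i\<bar> powr p) * indicator (B i) x) \<in> borel_measurable M"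
    if "i < l" for i
  proof -
    have [measurable]: "B i \<in> sets M" using assms(1) that by simp
    show ?thesis by measurable
  qed
  have "(\<Sum>i<l. \<integral>\<^sup>+ x. ennreal (\<bar>f x - a i\<bar> powr p) * indicator (B i) x \<partial>M)
      = (\<integral>\<^sup>+ x. (\<Sum>i<l. ennreal (\<bar>f x - a i\<bar> powr p) * indicator (B i) x) \<partial>M)"
    by (rule nn_integral_sum[symmetric]) (rule mi, simp)
  also have "\<dots> \<le> (\<integral>\<^sup>+ x. ennreal (\<bar>f x - g x\<bar> powr p) \<partial>M)"
  proof (rule nn_integral_mono)
    fix x
    show "(\<Sum>i<l. ennreal (\<bar>f x - a i\<bar> powr p) * indicator (B i) x) \<le> ennreal (\<bar>f x - g x\<bar> powr p)"
    proof (cases "\<exists>j<l. x \<in> B j")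
      case True
      then obtain j where j: "j < l" "x \<in> B j" by auto
      have "(\<Sum>i<l. ennreal (\<bar>f x - a i\<bar> powr p) * indicator (B i) x) = ennreal (\<bar>f x - a j\<bar> powr p)"
        by (rule sum_indicator_disjoint_eq[OF assms(2) j])
      then show ?thesis using assms(3)[OF j] by simp
    next
      case False
      then have "x \<notin> (\<Union>i<l. B i)" by auto
      then have "(\<Sum>i<l. ennreal (\<bar>f x - a i\<bar> powr p) * indicator (B i) x) = 0"
        by (rule sum_indicator_outside)
      then show ?thesis by simp
    qed
  qed
  finally show ?thesis .
qed

text \<open>Cutting A along the level sets of h, each piece contributes at most 2^p times the
  L^p error of h on it.\<close>

lemma Varpk_on_le_Lp_dist:
  assumes A: "A \<in> sets M" "emeasure M A < \<infinity>" and h: "h \<in> Gpk M p k"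
  shows "Varpk_on M p k f A \<le> 2 * Lp_dist M p f h"
proof -
  obtain l Ah a where memLp_h: "memLp M p h" and lk: "l \<le> k" and Ahs: "\<forall>i<l. Ah i \<in> sets M"
    and dj: "disjoint_family_on Ah {..<l}" and U: "(\<Union>i<l. Ah i) = space M"
    and h_eq: "h = (\<lambda>x. \<Sum>i<l. a i * indicator (Ah i) x)"
    using h by (rule GpkE)
  define B where "B i = A \<inter> Ah i" for i
  have "disjoint_family_on B {..<l}"
    using dj unfolding disjoint_family_on_def B_def by auto
  then have part: "measurable_partition M A l B"
    using A(1) sets.sets_into_space[OF A(1)] Ahs U unfolding measurable_partition_def B_def by auto
  let ?I = "\<lambda>i. \<integral>\<^sup>+ x. ennreal (\<bar>f x - a i\<bar> powr p) * indicator (B i) x \<partial>M"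
  let ?E = "\<integral>\<^sup>+ x. ennreal (\<bar>f x - h x\<bar> powr p) \<partial>M"
  have E: "?E = ennreal (enn2real ?E)" "0 \<le> enn2real ?E"
    using nn_integral_diff_powr_finite[OF memLp_h] by simp_all
  have "h x = a i" if "i < l" "x \<in> B i" for i x
    unfolding h_eq using dj that by (intro sum_indicator_disjoint_eq) (auto simp: B_def)
  then have sum_I: "(\<Sum>i<l. ?I i) \<le> ?E"
    using part by (intro sum_nn_integral_le_of_constant_on_pieces) (auto simp: measurable_partition_def)
  have "ennreal (varp_fam M p f l B powr p) = (\<Sum>i<l. ennreal (varp M p f (B i) powr p))"
    using one_le_p by (simp add: varp_fam_powr)
  also have "\<dots> \<le> (\<Sum>i<l. ennreal (2 powr p) * ?I i)"
    using part measurable_partition_finite[OF part A]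
    by (intro sum_mono varp_powr_le) (auto simp: measurable_partition_def)
  also have "\<dots> \<le> ennreal (2 powr p) * ?E"
    using sum_I by (simp add: sum_distrib_left[symmetric] mult_left_mono)
  also have "\<dots> = ennreal (2 powr p * enn2real ?E)" using E by (simp add: ennreal_mult)
  finally have "varp_fam M p f l B powr p \<le> 2 powr p * enn2real ?E"
    using E by (simp add: ennreal_le_iff)
  then have "(varp_fam M p f l B powr p) powr (1 / p) \<le> (2 powr p * enn2real ?E) powr (1 / p)"
    using one_le_p by (intro powr_mono2) auto
  then have "varp_fam M p f l B \<le> 2 * Lp_dist M p f h"
    unfolding Lp_dist_def using one_le_p E(2)
    by (simp add: powr_mult powr_powr varp_fam_nonneg)
  then show ?thesis using Varpk_on_le_varp_fam[OF part lk, of p f] by linarith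
qed

lemma Varpk_on_le_2_Dpk:
  assumes "1 \<le> k" "A \<in> sets M" "emeasure M A < \<infinity>"
  shows "Varpk_on M p k f A \<le> 2 * Dpk M p k f"
proof -
  have "Varpk_on M p k f A / 2 \<le> Dpk M p k f"
    using Varpk_on_le_Lp_dist[OF assms(2,3)] by (intro Dpk_greatest[OF assms(1)]) force
  then show ?thesis by simp
qed

lemma bdd_above_Varpk_on:
  "1 \<le> k \<Longrightarrow> bdd_above {Varpk_on M p k f A | A. A \<in> sets M \<and> emeasure M A < \<infinity>}"
  by (rule bdd_aboveI[of _ "2 * Dpk M p k f"]) (auto intro: Varpk_on_le_2_Dpk)

lemma Varpk_on_le_Varpk:
  "1 \<le> k \<Longrightarrow> A \<in> sets M \<Longrightarrow> emeasure M A < \<infinity> \<Longrightarrow> Varpk_on M p k f A \<le> Varpk M p k f"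
  unfolding Varpk_def by (intro cSup_upper bdd_above_Varpk_on) blast+

lemma Varpk_le_2_Dpk: "1 \<le> k \<Longrightarrow> Varpk M p k f \<le> 2 * Dpk M p k f"
  by (rule Varpk_least) (rule Varpk_on_le_2_Dpk)

subsection \<open>Lower bounds\<close>

lemma exists_step_fun_error_le:
  assumes A: "A \<in> sets M" "emeasure M A < \<infinity>" and part: "measurable_partition M A l B"
  obtains m where "(\<integral>\<^sup>+ x. ennreal (\<bar>f x - step_fun m B l x\<bar> powr p) \<partial>M)
     \<le> ennreal (varp_fam M p f l B powr p) + (\<integral>\<^sup>+ x. ennreal (\<bar>f x\<bar> powr p) * indicator (space M - A) x \<partial>M)"
proof -
  obtain m where m: "\<And>i. i < l \<Longrightarrow>
      (\<integral>\<^sup>+ x. ennreal (\<bar>f x - m i\<bar> powr p) * indicator (B i) x \<partial>M) \<le> ennreal (varp M p f (B i) powr p)"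
    using exists_constants_le_varp[OF part A] by blast
  have "(\<Sum>i<l. \<integral>\<^sup>+ x. ennreal (\<bar>f x - m i\<bar> powr p) * indicator (B i) x \<partial>M)
      \<le> (\<Sum>i<l. ennreal (varp M p f (B i) powr p))"
    by (intro sum_mono m) auto
  also have "\<dots> = ennreal (varp_fam M p f l B powr p)" using one_le_p by (simp add: varp_fam_powr)
  finally show ?thesis
    using that[of m] by (simp add: nn_integral_step_fun_error[OF part A(1)] add_right_mono)
qed

lemma exists_step_fun_zero_piece_error_le:
  assumes A: "A \<in> sets M" "emeasure M A < \<infinity>" and part: "measurable_partition M A l B"
    and j: "j < l" and c: "0 < c" "c \<le> 1"
    and mass_Bj: "(\<integral>\<^sup>+ x. ennreal (\<bar>f x\<bar> powr p) * indicator (B j) x \<partial>M)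
      \<le> ennreal (varp M p f (B j) powr p / c) + T"
    and tail: "(\<integral>\<^sup>+ x. ennreal (\<bar>f x\<bar> powr p) * indicator (space M - A) x \<partial>M) \<le> T"
  obtains m where "m j = 0"
    "(\<integral>\<^sup>+ x. ennreal (\<bar>f x - step_fun m B l x\<bar> powr p) \<partial>M)
      \<le> ennreal (varp_fam M p f l B powr p / c) + T + T"
proof -
  obtain m0 where m0: "\<And>i. i < l \<Longrightarrow>
      (\<integral>\<^sup>+ x. ennreal (\<bar>f x - m0 i\<bar> powr p) * indicator (B i) x \<partial>M) \<le> ennreal (varp M p f (B i) powr p)"
    using exists_constants_le_varp[OF part A] by blast
  define m where "m = m0(j := 0)"
  let ?I = "\<lambda>i. \<integral>\<^sup>+ x. ennreal (\<bar>f x - m i\<bar> powr p) * indicator (B i) x \<partial>M"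
  let ?w = "\<lambda>i. varp M p f (B i) powr p"
  have sum_w: "(\<Sum>i\<in>{..<l} - {j}. ?w i) + ?w j / c \<le> varp_fam M p f l B powr p / c"
  proof -
    have "(\<Sum>i\<in>{..<l} - {j}. ?w i) \<le> (\<Sum>i\<in>{..<l} - {j}. ?w i) / c"
      using c by (simp add: le_divide_eq mult_left_le sum_nonneg)
    then show ?thesis using j p_pos by (simp add: varp_fam_powr sum.remove[of _ j] add_divide_distrib)
  qed
  have others: "(\<Sum>i\<in>{..<l} - {j}. ?I i) \<le> (\<Sum>i\<in>{..<l} - {j}. ennreal (?w i))"
    using m0 by (intro sum_mono) (simp add: m_def)
  have "(\<Sum>i<l. ?I i) = (\<Sum>i\<in>{..<l} - {j}. ?I i) + ?I j"
    using j by (simp add: sum.remove[of _ j] add.commute)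
  also have "\<dots> \<le> ennreal ((\<Sum>i\<in>{..<l} - {j}. ?w i) + ?w j / c) + T"
    using others mass_Bj c by (simp add: m_def add_mono add.assoc sum_nonneg)
  also have "\<dots> \<le> ennreal (varp_fam M p f l B powr p / c) + T"
    using sum_w by (intro add_right_mono ennreal_leI)
  finally have "(\<Sum>i<l. ?I i) \<le> ennreal (varp_fam M p f l B powr p / c) + T" .
  then show ?thesis
    using that[of m] tail by (simp add: m_def nn_integral_step_fun_error[OF part A(1)] add_mono)
qed

lemma emeasure_abs_greater_finite:
  assumes "0 < \<delta>"
  shows "emeasure M {x\<in>space M. \<delta> < \<bar>f x\<bar>} < \<infinity>"
proof -
  let ?S = "{x\<in>space M. \<delta> < \<bar>f x\<bar>}"
  have S: "?S \<in> sets M" by measurable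
  have "(\<integral>\<^sup>+ x. ennreal (\<delta> powr p) * indicator ?S x \<partial>M) \<le> (\<integral>\<^sup>+ x. ennreal (\<bar>f x\<bar> powr p) * indicator ?S x \<partial>M)"
    using assms one_le_p by (intro nn_integral_mono) (auto simp: indicator_def intro: powr_mono2 ennreal_leI)
  then have "ennreal (\<delta> powr p) * emeasure M ?S < \<infinity>"
    using nn_integral_powr_indicator_finite[of ?S] S by (simp add: nn_integral_cmult_indicator)
  then show ?thesis using assms by (auto simp: ennreal_mult_less_top)
qed

lemma emeasure_abs_le_infinite:
  assumes "0 < \<delta>" "emeasure M (space M) = \<infinity>"
  shows "emeasure M {x\<in>space M. \<bar>f x\<bar> \<le> \<delta>} = \<infinity>"
proof (rule ccontr)
  let ?E = "{x\<in>space M. \<bar>f x\<bar> \<le> \<delta>}" and ?S = "{x\<in>space M. \<delta> < \<bar>f x\<bar>}"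
  assume "emeasure M ?E \<noteq> \<infinity>"
  moreover have "?E \<in> sets M" "?S \<in> sets M" by measurable
  then have "emeasure M (?E \<union> ?S) \<le> emeasure M ?E + emeasure M ?S" by (rule emeasure_subadditive)
  moreover have "?E \<union> ?S = space M" by auto
  ultimately show False using assms emeasure_abs_greater_finite[OF assms(1)] by (simp add: top_unique)
qed

lemma exists_small_level_tail:
  assumes "0 < (\<epsilon>::ennreal)"
  obtains \<delta> where "0 < \<delta>"
    "(\<integral>\<^sup>+ x. ennreal (\<bar>f x\<bar> powr p) * indicator {x\<in>space M. \<bar>f x\<bar> \<le> \<delta>} x \<partial>M) < \<epsilon>"
proof -
  define g where "g n x = ennreal (\<bar>f x\<bar> powr p) * indicator {x\<in>space M. \<bar>f x\<bar> \<le> 1 / real (Suc n)} x"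
    for n x
  have "decseq g"
  proof (rule decseq_SucI, rule le_funI)
    fix n x
    have "1 / real (Suc (Suc n)) \<le> 1 / real (Suc n)" by (simp add: frac_le)
    then show "g (Suc n) x \<le> g n x" unfolding g_def by (auto simp: indicator_def)
  qed
  moreover have "(INF n. g n x) = 0" for x
  proof (cases "f x = 0")
    case True
    then have "g 0 x = 0" unfolding g_def using one_le_p by simp
    then show ?thesis by (metis INF_lower2 UNIV_I order_refl le_zero_eq)
  next
    case False
    then obtain n where "inverse (real (Suc n)) < \<bar>f x\<bar>" using reals_Archimedean[of "\<bar>f x\<bar>"] by auto
    then have "g n x = 0" unfolding g_def by (auto simp: indicator_def field_simps)
    then show ?thesis by (metis INF_lower2 UNIV_I order_refl le_zero_eq)
  qed
  ultimately have "(INF n. integral\<^sup>N M (g n)) = 0"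
    using nn_integral_monotone_convergence_INF_decseq[of g M] nn_integral_powr_indicator_finite
    unfolding g_def by simp
  then have "(INF n. integral\<^sup>N M (g n)) < \<epsilon>" using assms by simp
  then obtain n where "integral\<^sup>N M (g n) < \<epsilon>" unfolding INF_less_iff by blast
  then show ?thesis using that[of "1 / real (Suc n)"] unfolding g_def by simp
qed

theorem Dpk_Suc_le_Varpk:
  assumes k: "1 \<le> k"
  shows "Dpk M p (k + 1) f \<le> Varpk M p k f"
proof (rule field_le_epsilon)
  fix e :: real assume "0 < e"
  then have e: "0 < e / 2" by simp
  have "0 < ennreal ((e / 2) powr p)" using e by simp
  then obtain \<delta> where "0 < \<delta>"
    and tail: "(\<integral>\<^sup>+ x. ennreal (\<bar>f x\<bar> powr p) * indicator {x\<in>space M. \<bar>f x\<bar> \<le> \<delta>} x \<partial>M)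
      < ennreal ((e / 2) powr p)"
    by (rule exists_small_level_tail)
  define A where "A = {x\<in>space M. \<delta> < \<bar>f x\<bar>}"
  have A: "A \<in> sets M" "emeasure M A < \<infinity>"
    unfolding A_def using emeasure_abs_greater_finite[OF \<open>0 < \<delta>\<close>] by simp_all measurable
  have "space M - A = {x\<in>space M. \<bar>f x\<bar> \<le> \<delta>}" unfolding A_def by auto
  with tail have tail_A: "(\<integral>\<^sup>+ x. ennreal (\<bar>f x\<bar> powr p) * indicator (space M - A) x \<partial>M)
      < ennreal ((e / 2) powr p)" by simp
  obtain l B where lk: "l \<le> k" and part: "measurable_partition M A l B"
    and v_less: "varp_fam M p f l B < Varpk_on M p k f A + e / 2"
    using exists_partition_varp_fam_less[OF k A(1) e] by blast
  let ?v = "varp_fam M p f l B"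
  obtain m where "(\<integral>\<^sup>+ x. ennreal (\<bar>f x - step_fun m B l x\<bar> powr p) \<partial>M)
      \<le> ennreal (?v powr p) + (\<integral>\<^sup>+ x. ennreal (\<bar>f x\<bar> powr p) * indicator (space M - A) x \<partial>M)"
    by (rule exists_step_fun_error_le[OF A part])
  also have "\<dots> \<le> ennreal (?v powr p + (e / 2) powr p)"
    using tail_A by (simp add: add_left_mono less_imp_le)
  finally have "Lp_dist M p f (step_fun m B l) \<le> (?v powr p) powr (1 / p) + ((e / 2) powr p) powr (1 / p)"
    using one_le_p by (intro Lp_dist_le_add) auto
  also have "\<dots> = ?v + e / 2" using one_le_p e varp_fam_nonneg[of M p f l B] by (simp add: powr_powr)
  finally have "Lp_dist M p f (step_fun m B l) \<le> ?v + e / 2" .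
  moreover have "step_fun m B l \<in> Gpk M p (Suc l)" using step_fun_in_Gpk_Suc[OF part A] one_le_p by simp
  then have "step_fun m B l \<in> Gpk M p (k + 1)" using Gpk_mono[of "Suc l" "k + 1"] lk by auto
  moreover have "Varpk_on M p k f A \<le> Varpk M p k f" using Varpk_on_le_Varpk[OF k A] .
  ultimately show "Dpk M p (k + 1) f \<le> Varpk M p k f + e"
    using v_less Dpk_le_Lp_dist[of "step_fun m B l" M p "k + 1" f] by linarith
qed

theorem Dpk_le_Varpk_on_space:
  assumes k: "1 \<le> k" and fin: "emeasure M (space M) < \<infinity>"
  shows "Dpk M p k f \<le> Varpk_on M p k f (space M)"
proof (rule Varpk_on_greatest[OF k sets.top])
  fix l B assume lk: "l \<le> k" and part: "measurable_partition M (space M) l B"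
  obtain m where "(\<integral>\<^sup>+ x. ennreal (\<bar>f x - step_fun m B l x\<bar> powr p) \<partial>M)
      \<le> ennreal (varp_fam M p f l B powr p)"
    using exists_step_fun_error_le[OF sets.top fin part] by auto
  then have "Lp_dist M p f (step_fun m B l) \<le> (varp_fam M p f l B powr p) powr (1 / p)"
    using one_le_p by (intro Lp_dist_le) auto
  also have "\<dots> = varp_fam M p f l B" using one_le_p varp_fam_nonneg[of M p f l B] by (simp add: powr_powr)
  finally have "Lp_dist M p f (step_fun m B l) \<le> varp_fam M p f l B" .
  moreover have "step_fun m B l \<in> Gpk M p l" using step_fun_in_Gpk[OF part fin] one_le_p by simp
  then have "step_fun m B l \<in> Gpk M p k" using Gpk_mono[OF lk] by blast
  ultimately show "Dpk M p k f \<le> varp_fam M p f l B" using Dpk_le_Lp_dist by (meson order_trans)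
qed

subsection \<open>Measures without atoms of infinite measure\<close>

lemma exists_separated_sets:
  fixes k :: nat
  assumes inf: "emeasure M (space M) = \<infinity>"
    and noatom: "\<not> (\<exists>A. is_atom M A \<and> emeasure M A = \<infinity>)" and t: "0 < t"
  obtains S D where "S \<in> fmeasurable M" "D \<in> fmeasurable M"
    "(\<integral>\<^sup>+ x. ennreal (\<bar>f x\<bar> powr p) * indicator (space M - S) x \<partial>M) < ennreal t"
    "real k * measure M S < t * measure M D"
    "\<And>x y. x \<in> S \<Longrightarrow> y \<in> D \<Longrightarrow> \<bar>f y\<bar> \<le> t * \<bar>f x\<bar>"
proof -
  have "0 < ennreal t" using t by simp
  then obtain \<delta> where \<delta>: "0 < \<delta>"
    and tail: "(\<integral>\<^sup>+ x. ennreal (\<bar>f x\<bar> powr p) * indicator {x\<in>space M. \<bar>f x\<bar> \<le> \<delta>} x \<partial>M) < ennreal t"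
    by (rule exists_small_level_tail)
  define S where "S = {x\<in>space M. \<delta> < \<bar>f x\<bar>}"
  have "S \<in> sets M" unfolding S_def by measurable
  then have S: "S \<in> fmeasurable M"
    using emeasure_abs_greater_finite[OF \<delta>] unfolding S_def by (intro fmeasurableI)
  have "space M - S = {x\<in>space M. \<bar>f x\<bar> \<le> \<delta>}" unfolding S_def by auto
  with tail have tail_S: "(\<integral>\<^sup>+ x. ennreal (\<bar>f x\<bar> powr p) * indicator (space M - S) x \<partial>M) < ennreal t"
    by simp
  define E where "E = {x\<in>space M. \<bar>f x\<bar> \<le> t * \<delta>}"
  have "E \<in> sets M" unfolding E_def by measurable
  moreover have "emeasure M E = \<infinity>"
    unfolding E_def using t \<delta> by (intro emeasure_abs_le_infinite inf) simp
  ultimately obtain D where D: "D \<in> sets M" "D \<subseteq> E" "emeasure M D < \<infinity>"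
    and large: "ennreal (real k * measure M S / t + 1) \<le> emeasure M D"
    by (rule exists_finite_subset_ge[OF noatom])
  have "real k * measure M S / t + 1 \<le> measure M D"
    using large D by (simp add: emeasure_eq_ennreal_measure)
  then have small: "real k * measure M S < t * measure M D"
    using t by (simp add: field_simps)
  have sep: "\<bar>f y\<bar> \<le> t * \<bar>f x\<bar>" if "x \<in> S" "y \<in> D" for x y
  proof -
    have "\<bar>f y\<bar> \<le> t * \<delta>" using that D(2) unfolding E_def by auto
    also have "\<dots> \<le> t * \<bar>f x\<bar>" using that t unfolding S_def by (intro mult_left_mono) auto
    finally show ?thesis .
  qed
  show ?thesis using that[OF S _ tail_S small sep] D by (simp add: fmeasurableI)
qed

lemma var_integral_ge_separated:
  assumes sets: "B \<in> sets M" "S \<in> sets M" "D \<in> sets M" and c: "0 \<le> c"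
    and sep: "\<And>x y. x \<in> S \<Longrightarrow> y \<in> D \<Longrightarrow> c * \<bar>f x\<bar> \<le> \<bar>f x - f y\<bar>"
  shows "ennreal (c powr p) * emeasure M (B \<inter> D)
      * (\<integral>\<^sup>+ x. ennreal (\<bar>f x\<bar> powr p) * indicator (B \<inter> S) x \<partial>M) \<le> var_integral B"
proof -
  let ?g = "\<lambda>x. ennreal ((c * \<bar>f x\<bar>) powr p)"
  have "(\<integral>\<^sup>+ x. (\<integral>\<^sup>+ y. ?g x * indicator (B \<inter> D) y \<partial>M) * indicator (B \<inter> S) x \<partial>M) \<le> var_integral B"
    unfolding var_integral_def
  proof (intro nn_integral_mono)
    fix x
    have "?g x * indicator (B \<inter> D) y \<le> ennreal (\<bar>f x - f y\<bar> powr p) * indicator B y"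
      if "x \<in> S" for y
      using sep[OF that, of y] c one_le_p by (auto simp: indicator_def intro!: ennreal_leI powr_mono2)
    then show "(\<integral>\<^sup>+ y. ?g x * indicator (B \<inter> D) y \<partial>M) * indicator (B \<inter> S) x
      \<le> (\<integral>\<^sup>+ y. ennreal (\<bar>f x - f y\<bar> powr p) * indicator B y \<partial>M) * indicator B x"
      by (cases "x \<in> B \<inter> S") (auto intro!: nn_integral_mono)
  qed
  also have "(\<integral>\<^sup>+ x. (\<integral>\<^sup>+ y. ?g x * indicator (B \<inter> D) y \<partial>M) * indicator (B \<inter> S) x \<partial>M)
     = (\<integral>\<^sup>+ x. (ennreal (c powr p) * emeasure M (B \<inter> D)) * (ennreal (\<bar>f x\<bar> powr p) * indicator (B \<inter> S) x) \<partial>M)"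
  proof (rule nn_integral_cong)
    fix x
    have "(\<integral>\<^sup>+ y. ?g x * indicator (B \<inter> D) y \<partial>M) = ?g x * emeasure M (B \<inter> D)"
      using sets by (intro nn_integral_cmult_indicator) auto
    moreover have "?g x = ennreal (c powr p) * ennreal (\<bar>f x\<bar> powr p)"
      using c by (simp add: powr_mult ennreal_mult)
    ultimately show "(\<integral>\<^sup>+ y. ?g x * indicator (B \<inter> D) y \<partial>M) * indicator (B \<inter> S) x
      = (ennreal (c powr p) * emeasure M (B \<inter> D)) * (ennreal (\<bar>f x\<bar> powr p) * indicator (B \<inter> S) x)"
      by (simp add: mult_ac)
  qed
  also have "\<dots> = ennreal (c powr p) * emeasure M (B \<inter> D)
      * (\<integral>\<^sup>+ x. ennreal (\<bar>f x\<bar> powr p) * indicator (B \<inter> S) x \<partial>M)"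
  proof (rule nn_integral_cmult)
    have [measurable]: "B \<in> sets M" "S \<in> sets M" using sets by auto
    show "(\<lambda>x. ennreal (\<bar>f x\<bar> powr p) * indicator (B \<inter> S) x) \<in> borel_measurable M" by measurable
  qed
  finally show ?thesis .
qed

text \<open>On a piece B lying mostly in D, the L^p mass of f on B \<inter> S is controlled by var_p(f,B):
  every x \<in> B \<inter> S sees |f x - f y| \<ge> (1 - t) |f x| for y in the large part B \<inter> D.\<close>

lemma nn_integral_powr_mostly_separated_le:
  assumes B: "B \<in> fmeasurable M" and S: "S \<in> sets M" and D: "D \<in> sets M" and t: "0 \<le> t" "t < 1"
    and sep: "\<And>x y. x \<in> S \<Longrightarrow> y \<in> D \<Longrightarrow> \<bar>f y\<bar> \<le> t * \<bar>f x\<bar>"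
    and pos: "0 < measure M B" and most: "(1 - t) * measure M B \<le> measure M (B \<inter> D)"
  shows "(\<integral>\<^sup>+ x. ennreal (\<bar>f x\<bar> powr p) * indicator B x \<partial>M)
    \<le> ennreal (varp M p f B powr p / (1 - t) powr (p + 1))
      + (\<integral>\<^sup>+ x. ennreal (\<bar>f x\<bar> powr p) * indicator (space M - S) x \<partial>M)"
proof -
  define J where "J = enn2real (\<integral>\<^sup>+ x. ennreal (\<bar>f x\<bar> powr p) * indicator (B \<inter> S) x \<partial>M)"
  have J: "(\<integral>\<^sup>+ x. ennreal (\<bar>f x\<bar> powr p) * indicator (B \<inter> S) x \<partial>M) = ennreal J" "0 \<le> J"
    using nn_integral_powr_indicator_finite[of "B \<inter> S"] by (simp_all add: J_def)
  have BD: "B \<inter> D \<in> fmeasurable M" using B D by (rule fmeasurable_Int_fmeasurable)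
  have "(1 - t) * \<bar>f x\<bar> \<le> \<bar>f x - f y\<bar>" if "x \<in> S" "y \<in> D" for x y
    using sep[OF that] by (simp add: algebra_simps)
  then have "ennreal ((1 - t) powr p) * emeasure M (B \<inter> D) * ennreal J \<le> var_integral B"
    using var_integral_ge_separated[of B S D "1 - t"] B S D t J by auto
  also have "\<dots> = ennreal (varp M p f B powr p * measure M B)"
    using B by (intro var_integral_eq_varp) (auto simp: fmeasurable_def)
  finally have "(1 - t) powr p * measure M (B \<inter> D) * J \<le> varp M p f B powr p * measure M B"
    using BD J(2) t by (simp add: emeasure_eq_measure2 ennreal_mult[symmetric])
  moreover have "(1 - t) powr p * ((1 - t) * measure M B) * J \<le> (1 - t) powr p * measure M (B \<inter> D) * J"
    using most J(2) by (intro mult_right_mono mult_left_mono) auto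
  ultimately have "(1 - t) powr (p + 1) * J * measure M B \<le> varp M p f B powr p * measure M B"
    using t by (simp add: powr_add mult_ac)
  then have "J \<le> varp M p f B powr p / (1 - t) powr (p + 1)"
    using pos t by (simp add: field_simps)
  then have "(\<integral>\<^sup>+ x. ennreal (\<bar>f x\<bar> powr p) * indicator (B \<inter> S) x \<partial>M)
      \<le> ennreal (varp M p f B powr p / (1 - t) powr (p + 1))"
    unfolding J(1) by (rule ennreal_leI)
  moreover have "(\<integral>\<^sup>+ x. ennreal (\<bar>f x\<bar> powr p) * indicator B x \<partial>M)
      \<le> (\<integral>\<^sup>+ x. ennreal (\<bar>f x\<bar> powr p) * indicator (B \<inter> S) x \<partial>M)
        + (\<integral>\<^sup>+ x. ennreal (\<bar>f x\<bar> powr p) * indicator (space M - S) x \<partial>M)"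
    using B S by (intro nn_integral_indicator_le_Int_Diff) auto
  ultimately show ?thesis by (meson add_right_mono order_trans)
qed

text \<open>The step function takes the value 0 on a piece B_j lying mostly in D: the mass of f on B_j
  is then paid for by var_p(f,B_j) up to the factor (1-t)^{-(p+1)}, so no extra value is needed.\<close>

lemma Dpk_le_Varpk_perturbed:
  assumes k: "1 \<le> k" and inf: "emeasure M (space M) = \<infinity>"
    and noatom: "\<not> (\<exists>A. is_atom M A \<and> emeasure M A = \<infinity>)" and t: "0 < t" "t < 1"
  shows "Dpk M p k f \<le> (Varpk M p k f + t) / (1 - t) powr ((p + 1) / p) + (2 * t) powr (1 / p)"
proof -
  obtain S D where S: "S \<in> fmeasurable M" and D: "D \<in> fmeasurable M"
    and tail: "(\<integral>\<^sup>+ x. ennreal (\<bar>f x\<bar> powr p) * indicator (space M - S) x \<partial>M) < ennreal t"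
    and small: "real k * measure M S < t * measure M D"
    and sep: "\<And>x y. x \<in> S \<Longrightarrow> y \<in> D \<Longrightarrow> \<bar>f y\<bar> \<le> t * \<bar>f x\<bar>"
    by (rule exists_separated_sets[OF inf noatom t(1), of k]) blast
  let ?T = "\<integral>\<^sup>+ x. ennreal (\<bar>f x\<bar> powr p) * indicator (space M - S) x \<partial>M"
  define A where "A = S \<union> D"
  have "A \<in> fmeasurable M" unfolding A_def using S D by (rule fmeasurable.Un)
  then have A: "A \<in> sets M" "emeasure M A < \<infinity>" by (auto simp: fmeasurable_def)
  obtain l B where lk: "l \<le> k" and part: "measurable_partition M A l B"
    and v_less: "varp_fam M p f l B < Varpk_on M p k f A + t"
    using exists_partition_varp_fam_less[OF k A(1) t(1)] by blast
  obtain j where j: "j < l" "B j \<in> fmeasurable M" "0 < measure M (B j)"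
    "(1 - t) * measure M (B j) \<le> measure M (B j \<inter> D)"
    using exists_piece_mostly_in[OF part[unfolded A_def] lk S D small t(1)] by blast
  define c where "c = (1 - t) powr (p + 1)"
  have c: "0 < c" "c \<le> 1" using t one_le_p unfolding c_def by (auto intro: powr_le1)
  have "(\<integral>\<^sup>+ x. ennreal (\<bar>f x\<bar> powr p) * indicator (B j) x \<partial>M)
      \<le> ennreal (varp M p f (B j) powr p / c) + ?T"
    unfolding c_def using nn_integral_powr_mostly_separated_le[OF j(2) _ _ _ t(2) sep j(3,4)] S D t
    by auto
  moreover have "(\<integral>\<^sup>+ x. ennreal (\<bar>f x\<bar> powr p) * indicator (space M - A) x \<partial>M) \<le> ?T"
    by (intro nn_integral_mono) (auto simp: A_def indicator_def)
  ultimately obtain m where "m j = 0" and err: "(\<integral>\<^sup>+ x. ennreal (\<bar>f x - step_fun m B l x\<bar> powr p) \<partial>M)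
      \<le> ennreal (varp_fam M p f l B powr p / c) + ?T + ?T"
    using exists_step_fun_zero_piece_error_le[OF A part j(1) c] by blast
  note err
  also have "\<dots> \<le> ennreal (varp_fam M p f l B powr p / c) + ennreal t + ennreal t"
    using tail by (intro add_mono order_refl less_imp_le)
  also have "\<dots> = ennreal (varp_fam M p f l B powr p / c + (t + t))"
    using c t ennreal_plus[of t t] by (simp add: add_ac)
  finally have "Lp_dist M p f (step_fun m B l)
      \<le> (varp_fam M p f l B powr p / c) powr (1 / p) + (t + t) powr (1 / p)"
    using one_le_p t c by (intro Lp_dist_le_add) auto
  also have "(varp_fam M p f l B powr p / c) powr (1 / p) = varp_fam M p f l B / (1 - t) powr ((p + 1) / p)"
    using c t one_le_p varp_fam_nonneg[of M p f l B] unfolding c_def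
    by (simp add: powr_divide powr_powr)
  also have "\<dots> \<le> (Varpk M p k f + t) / (1 - t) powr ((p + 1) / p)"
    using v_less Varpk_on_le_Varpk[OF k A] t by (intro divide_right_mono) auto
  finally have "Lp_dist M p f (step_fun m B l)
      \<le> (Varpk M p k f + t) / (1 - t) powr ((p + 1) / p) + (2 * t) powr (1 / p)" by simp
  moreover have "step_fun m B l \<in> Gpk M p k"
    using step_fun_in_Gpk_zero_piece[OF part A p_pos j(1), where m=m] \<open>m j = 0\<close> Gpk_mono[OF lk]
    by auto
  ultimately show ?thesis using Dpk_le_Lp_dist[of "step_fun m B l" M p k f] by linarith
qed

theorem Dpk_le_Varpk_infinite:
  assumes k: "1 \<le> k" and inf: "emeasure M (space M) = \<infinity>"
    and noatom: "\<not> (\<exists>A. is_atom M A \<and> emeasure M A = \<infinity>)"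
  shows "Dpk M p k f \<le> Varpk M p k f"
proof -
  let ?V = "Varpk M p k f"
  let ?bound = "\<lambda>t. (?V + t) / (1 - t) powr ((p + 1) / p) + (2 * t) powr (1 / p)"
  have "((\<lambda>t::real. 1 - t) \<longlongrightarrow> 1) (at_right 0)"
    by (auto intro!: tendsto_eq_intros)
  then have "((\<lambda>t. (1 - t) powr ((p + 1) / p)) \<longlongrightarrow> 1) (at_right 0)"
    using tendsto_powr[OF _ tendsto_const[of "(p + 1) / p"]] by fastforce
  moreover have "((\<lambda>t::real. (2 * t) powr (1 / p)) \<longlongrightarrow> 0) (at_right 0)"
    using one_le_p
    by (intro tendsto_zero_powrI) (auto intro!: tendsto_eq_intros eventually_at_rightI[of 0 1])
  ultimately have "(?bound \<longlongrightarrow> (?V + 0) / 1 + 0) (at_right 0)"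
    by (intro tendsto_intros) auto
  moreover have "\<forall>\<^sub>F t in at_right 0. Dpk M p k f \<le> ?bound t"
    using eventually_at_rightI[of 0 1] Dpk_le_Varpk_perturbed[OF k inf noatom]
    by (metis (no_types, lifting) greaterThanLessThan_iff zero_less_one)
  ultimately show ?thesis using tendsto_le[OF trivial_limit_at_right_real _ tendsto_const] by fastforce
qed

theorem Dpk_le_Varpk:
  assumes k: "1 \<le> k" and noatom: "\<not> (\<exists>A. is_atom M A \<and> emeasure M A = \<infinity>)"
  shows "Dpk M p k f \<le> Varpk M p k f"
proof (cases "emeasure M (space M) = \<infinity>")
  case True
  then show ?thesis by (rule Dpk_le_Varpk_infinite[OF k _ noatom])
next
  case False
  then have fin: "emeasure M (space M) < \<infinity>" by (simp add: top.not_eq_extremum)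
  show ?thesis using Dpk_le_Varpk_on_space[OF k fin] Varpk_on_le_Varpk[OF k sets.top fin] by linarith
qed

end

theorem proposition3p5:
  fixes M :: "'a measure" and p :: real and k :: nat and f :: "'a \<Rightarrow> real"
  assumes nonzero: "emeasure M (space M) \<noteq> 0"
    and p: "1 \<le> p" and k: "1 \<le> k"
    and f: "memLp M p f"
  shows "(Dpk M p (k + 1) f \<le> Varpk M p k f \<and> Varpk M p k f \<le> 2 * Dpk M p k f) \<and>
         (finite_measure M \<longrightarrow>
           Dpk M p k f \<le> Varpk_on M p k f (space M) \<and>
           Varpk_on M p k f (space M) \<le> Varpk M p k f \<and>
           Varpk M p k f \<le> 2 * Dpk M p k f \<and>
           2 * Dpk M p k f \<le> 2 * Varpk_on M p k f (space M)) \<and>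
         ((\<not> (\<exists>A. is_atom M A \<and> emeasure M A = \<infinity>)) \<longrightarrow>
           Dpk M p k f \<le> Varpk M p k f \<and> Varpk M p k f \<le> 2 * Dpk M p k f)"
proof -
  interpret Lp_function M p f using p f by unfold_locales
  have le_2D: "Varpk M p k f \<le> 2 * Dpk M p k f" by (rule Varpk_le_2_Dpk[OF k])
  have "Dpk M p k f \<le> Varpk_on M p k f (space M) \<and> Varpk_on M p k f (space M) \<le> Varpk M p k f"
    if "finite_measure M"
  proof -
    have fin: "emeasure M (space M) < \<infinity>"
      using that by (simp add: finite_measure.emeasure_finite less_top[symmetric])
    show ?thesis using Dpk_le_Varpk_on_space[OF k fin] Varpk_on_le_Varpk[OF k sets.top fin] by simp
  qed
  then show ?thesis using Dpk_Suc_le_Varpk[OF k] Dpk_le_Varpk[OF k] le_2D by auto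
qed

end
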